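(* Let $a,b,c,p\in\mathbb{C}$ with $-c\notin\mathbb{N}\cup\{0\}$. Define $(u_n)$ and $(v_n)$ by $u_0=1$, $u_1=\frac{ab}{c}+ip$, $u_2=\frac{iabp}{c}+\frac{a(a+1)b(b+1)}{2c(c+1)}-\frac{p^2}{2}$, $v_0=1$, $v_1=\frac{ab}{c}-ip$, $v_2=-\frac{iabp}{c}+\frac{a(a+1)b(b+1)}{2c(c+1)}-\frac{p^2}{2}$, and for all integers $n\ge2$, \[ u_{n+1}=\frac{(a+n)(b+n)+ip(c+2n)}{(n+1)(c+n)}u_n+\frac{p\left(p-i(a+b+2n-1)\right)}{(n+1)(c+n)}u_{n-1}-\frac{p^2}{(n+1)(c+n)}u_{n-2}, \] \[ v_{n+1}=\frac{(a+n)(b+n)-ip(c+2n)}{(n+1)(c+n)}v_n+\frac{p\left(p+i(a+b+2n-1)\right)}{(n+1)(c+n)}v_{n-1}-\frac{p^2}{(n+1)(c+n)}v_{n-2}. \] Then \[ \cos(pz)F(a,b;c;z)=\sum_{n=0}^\infty\frac{u_n+v_n}{2}z^n,\qquad |z|<1. \]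
   Context: Here $i$ is the imaginary unit. For $a\in\mathbb{C}$, $(a)_n=a(a+1)\cdots(a+n-1)$ denotes the Pochhammer symbol, with $(a)_0=1$. For $a,b,c\in\mathbb{C}$ with $-c\notin\mathbb{N}\cup\{0\}$, the Gaussian hypergeometric function is $F(a,b;c;z)=\sum_{n=0}^\infty \frac{(a)_n(b)_n}{(c)_n\,n!}z^n$, $|z|<1$. *)

theory Defs
  imports "HOL-Analysis.Analysis"
begin

definition hypF :: "complex \<Rightarrow> complex \<Rightarrow> complex \<Rightarrow> complex \<Rightarrow> complex" where
  "hypF a b c z = (\<Sum>n. pochhammer a n * pochhammer b n / (pochhammer c n * fact n) * z ^ n)"

fun useq :: "complex \<Rightarrow> complex \<Rightarrow> complex \<Rightarrow> complex \<Rightarrow> nat \<Rightarrow> complex" where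
  "useq a b c p 0 = 1"
| "useq a b c p (Suc 0) = a * b / c + \<i> * p"
| "useq a b c p (Suc (Suc 0)) = \<i> * a * b * p / c
     + a * (a + 1) * b * (b + 1) / (2 * c * (c + 1)) - p ^ 2 / 2"
| "useq a b c p (Suc (Suc (Suc n))) =
     (let m = of_nat (n + 2) :: complex in
       ((a + m) * (b + m) + \<i> * p * (c + 2 * m)) / ((m + 1) * (c + m)) * useq a b c p (Suc (Suc n))
     + p * (p - \<i> * (a + b + 2 * m - 1)) / ((m + 1) * (c + m)) * useq a b c p (Suc n)
     - p ^ 2 / ((m + 1) * (c + m)) * useq a b c p n)"

fun vseq :: "complex \<Rightarrow> complex \<Rightarrow> complex \<Rightarrow> complex \<Rightarrow> nat \<Rightarrow> complex" where
  "vseq a b c p 0 = 1"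
| "vseq a b c p (Suc 0) = a * b / c - \<i> * p"
| "vseq a b c p (Suc (Suc 0)) = - \<i> * a * b * p / c
     + a * (a + 1) * b * (b + 1) / (2 * c * (c + 1)) - p ^ 2 / 2"
| "vseq a b c p (Suc (Suc (Suc n))) =
     (let m = of_nat (n + 2) :: complex in
       ((a + m) * (b + m) - \<i> * p * (c + 2 * m)) / ((m + 1) * (c + m)) * vseq a b c p (Suc (Suc n))
     + p * (p + \<i> * (a + b + 2 * m - 1)) / ((m + 1) * (c + m)) * vseq a b c p (Suc n)
     - p ^ 2 / ((m + 1) * (c + m)) * vseq a b c p n)"

end

theory Submission
  imports Defs
begin

(* The sequences u and v are the Taylor coefficients of exp (i p z) F(z) and exp (-i p z) F(z),
   where F = F(a,b;c;-) is the hypergeometric series. Indeed F solves Gauss' equation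
   z (1 - z) F'' + (c - (a + b + 1) z) F' = a b F; writing F' and F'' in terms of G = exp (k z) F
   turns it into a linear equation for G, whose coefficient recursion is the stated four-term
   recurrence for k = i p. Since F converges on the unit disc (ratio test) and exp is entire,
   the Cauchy product converges there, and cos (p z) = (exp (i p z) + exp (-i p z)) / 2. *)

lemma LIMSEQ_add_of_nat_over_add_of_nat:
  fixes a b :: "'a :: real_normed_field"
  shows "(\<lambda>n. (a + of_nat n) / (b + of_nat n)) \<longlonglongrightarrow> 1"
proof -
  have "(\<lambda>n. (a / of_nat n + 1) / (b / of_nat n + 1)) \<longlonglongrightarrow> (0 + 1) / (0 + 1)"
    by (intro tendsto_intros) auto
  moreover have "\<forall>\<^sub>F n in sequentially.
                   (a / of_nat n + 1) / (b / of_nat n + 1) = (a + of_nat n) / (b + of_nat n)"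
    by (intro eventually_sequentiallyI[of 1]) (simp add: divide_simps)
  ultimately show ?thesis by (simp add: tendsto_cong)
qed

lemma fps_exp_mult_deriv:
  fixes F :: "'a :: field_char_0 fps"
  shows "fps_exp k * fps_deriv F = fps_deriv (fps_exp k * F) - fps_const k * (fps_exp k * F)"
  by (simp add: algebra_simps)

definition hyp_fps :: "complex \<Rightarrow> complex \<Rightarrow> complex \<Rightarrow> complex fps" where
  "hyp_fps a b c = Abs_fps (\<lambda>n. pochhammer a n * pochhammer b n / (pochhammer c n * fact n))"

lemma eval_hyp_fps: "eval_fps (hyp_fps a b c) z = hypF a b c z"
  by (simp add: eval_fps_def hyp_fps_def hypF_def)

(* No hypothesis on c is needed: if c + n = 0, both sides vanish because x / 0 = 0. *)
lemma hyp_fps_nth_Suc: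
  "fps_nth (hyp_fps a b c) (Suc n)
     = (a + of_nat n) * (b + of_nat n) / ((of_nat n + 1) * (c + of_nat n)) * fps_nth (hyp_fps a b c) n"
  by (simp add: hyp_fps_def pochhammer_Suc field_simps)

lemma fps_conv_radius_hyp_fps: "fps_conv_radius (hyp_fps a b c) \<ge> 1"
  unfolding fps_conv_radius_def
proof (rule conv_radius_geI_ex')
  fix r :: real assume "0 < r" "ereal r < 1"
  define f where "f = fps_nth (hyp_fps a b c)"
  define q where "q n = (a + of_nat n) / (1 + of_nat n) * ((b + of_nat n) / (c + of_nat n))" for n
  define s where "s = (1 + r) / 2"
  have "(\<lambda>n. norm (q n) * r) \<longlonglongrightarrow> norm (1 * 1 :: complex) * r"
    unfolding q_def by (intro tendsto_intros LIMSEQ_add_of_nat_over_add_of_nat)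
  moreover have "r < s" using \<open>ereal r < 1\<close> by (simp add: s_def)
  ultimately obtain N where N: "\<And>n. n \<ge> N \<Longrightarrow> norm (q n) * r < s"
    by (fastforce dest!: order_tendstoD(2) simp: eventually_sequentially)
  show "summable (\<lambda>n. f n * of_real r ^ n)"
  proof (rule summable_ratio_test)
    show "s < 1" using \<open>ereal r < 1\<close> by (simp add: s_def)
  next
    fix n assume "N \<le> n"
    have "f (Suc n) = q n * f n"
      by (simp add: f_def q_def hyp_fps_nth_Suc add.commute)
    then have "norm (f (Suc n) * of_real r ^ Suc n) = norm (q n) * r * norm (f n * of_real r ^ n)"
      using \<open>0 < r\<close> by (simp add: norm_mult norm_power)
    also have "\<dots> \<le> s * norm (f n * of_real r ^ n)"
      using N[OF \<open>N \<le> n\<close>] by (intro mult_right_mono) auto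
    finally show "norm (f (Suc n) * of_real r ^ Suc n) \<le> s * norm (f n * of_real r ^ n)" .
  qed
qed

lemma hyp_rec_denominator_nonzero:
  fixes c :: complex
  assumes "\<forall>n::nat. c \<noteq> - of_nat n"
  shows "(of_nat n + 1) * (c + of_nat n) \<noteq> 0"
proof -
  have "c + of_nat n \<noteq> 0" using assms[rule_format, of n] by (auto simp: add_eq_0_iff)
  moreover have "of_nat n + 1 \<noteq> (0::complex)" by (metis of_nat_Suc of_nat_neq_0 add.commute)
  ultimately show ?thesis by simp
qed

lemma hyp_fps_ode:
  fixes a b c :: complex
  assumes c: "\<forall>n::nat. c \<noteq> - of_nat n"
  defines "F \<equiv> hyp_fps a b c"
  shows "fps_X * (1 - fps_X) * fps_deriv (fps_deriv F)
           + (fps_const c - fps_const (a + b + 1) * fps_X) * fps_deriv F = fps_const (a * b) * F"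
proof (rule fps_ext)
  fix n
  have rec: "(of_nat n + 1) * (c + of_nat n) * fps_nth F (Suc n)
               = (a + of_nat n) * (b + of_nat n) * fps_nth F n"
    using hyp_rec_denominator_nonzero[OF c, of n] by (simp add: F_def hyp_fps_nth_Suc)
  show "fps_nth (fps_X * (1 - fps_X) * fps_deriv (fps_deriv F)
           + (fps_const c - fps_const (a + b + 1) * fps_X) * fps_deriv F) n
        = fps_nth (fps_const (a * b) * F) n"
    using rec by (cases n) (auto simp: ring_distribs fps_X_mult_nth algebra_simps)
qed

lemma fps_nth_exp_mult_hyp_fps_rec:
  fixes a b c k :: complex and n :: nat
  assumes c: "\<forall>n::nat. c \<noteq> - of_nat n"
  defines "g \<equiv> fps_nth (fps_exp k * hyp_fps a b c)" and "m \<equiv> of_nat (n + 2) :: complex"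
  shows "(m + 1) * (c + m) * g (n + 3)
           = ((a + m) * (b + m) + k * (c + 2 * m)) * g (n + 2)
             - k * (k + a + b + 2 * m - 1) * g (n + 1) + k ^ 2 * g n"
proof -
  define F where "F = hyp_fps a b c"
  define G where "G = fps_exp k * F"
  define G1 where "G1 = fps_deriv G - fps_const k * G"
  define G2 where "G2 = fps_deriv G1 - fps_const k * G1"
  have F1: "fps_exp k * fps_deriv F = G1"
    unfolding G1_def G_def by (rule fps_exp_mult_deriv)
  have F2: "fps_exp k * fps_deriv (fps_deriv F) = G2"
    unfolding G2_def F1[symmetric] by (rule fps_exp_mult_deriv)
  have "fps_exp k * (fps_X * (1 - fps_X) * fps_deriv (fps_deriv F)
           + (fps_const c - fps_const (a + b + 1) * fps_X) * fps_deriv F)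
        = fps_exp k * (fps_const (a * b) * F)"
    by (simp only: F_def hyp_fps_ode[OF c])
  then have "fps_X * (1 - fps_X) * G2 + (fps_const c - fps_const (a + b + 1) * fps_X) * G1
               = fps_const (a * b) * G"
    unfolding F1[symmetric] F2[symmetric] G_def by (simp add: distrib_left mult.left_commute)
  then have "fps_nth (fps_X * (1 - fps_X) * G2
                        + (fps_const c - fps_const (a + b + 1) * fps_X) * G1) (n + 2)
               = fps_nth (fps_const (a * b) * G) (n + 2)"
    by (rule arg_cong)
  then have coeff: "fps_nth G2 (n + 1) - fps_nth G2 n + c * fps_nth G1 (n + 2)
                      - (a + b + 1) * fps_nth G1 (n + 1) - a * b * fps_nth G (n + 2) = 0"
    by (simp add: ring_distribs fps_X_mult_nth algebra_simps)
  have g: "g = fps_nth G"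
    by (simp add: g_def G_def F_def)
  have G1_nth: "fps_nth G1 j = of_nat (j + 1) * g (j + 1) - k * g j" for j
    by (simp add: G1_def g)
  have G2_nth: "fps_nth G2 j = of_nat (j + 1) * fps_nth G1 (j + 1) - k * fps_nth G1 j" for j
    by (simp add: G2_def)
  have "(m + 1) * (c + m) * g (n + 3)
          - (((a + m) * (b + m) + k * (c + 2 * m)) * g (n + 2)
             - k * (k + a + b + 2 * m - 1) * g (n + 1) + k ^ 2 * g n)
        = fps_nth G2 (n + 1) - fps_nth G2 n + c * fps_nth G1 (n + 2)
            - (a + b + 1) * fps_nth G1 (n + 1) - a * b * fps_nth G (n + 2)"
    unfolding G2_nth G1_nth g by (simp add: m_def algebra_simps power2_eq_square eval_nat_numeral)
  with coeff show ?thesis by simp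
qed

lemma useq_eq_fps_nth:
  fixes a b c p :: complex
  assumes "\<forall>n::nat. c \<noteq> - of_nat n"
  shows "useq a b c p n = fps_nth (fps_exp (\<i> * p) * hyp_fps a b c) n"
  using assms
proof (induction a b c p n rule: useq.induct)
  case (1 a b c p)
  then show ?case by (simp add: hyp_fps_def)
next
  case (2 a b c p)
  then show ?case by (simp add: hyp_fps_def fps_mult_nth)
next
  case (3 a b c p)
  then show ?case
    by (simp add: hyp_fps_def fps_mult_nth eval_nat_numeral pochhammer_Suc power2_eq_square algebra_simps)
next
  case (4 a b c p n)
  define g where "g = fps_nth (fps_exp (\<i> * p) * hyp_fps a b c)"
  define m where "m = (of_nat (n + 2) :: complex)"
  have "(m + 1) * (c + m) * g (Suc (Suc (Suc n)))
          = ((a + m) * (b + m) + \<i> * p * (c + 2 * m)) * g (Suc (Suc n))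
            + p * (p - \<i> * (a + b + 2 * m - 1)) * g (Suc n) - p ^ 2 * g n"
    using fps_nth_exp_mult_hyp_fps_rec[OF "4.prems", where a = a and b = b and k = "\<i> * p" and n = n,
        folded g_def m_def]
    by (simp add: algebra_simps power2_eq_square complex_i_mult_minus eval_nat_numeral)
  moreover have "(m + 1) * (c + m) \<noteq> 0"
    unfolding m_def by (rule hyp_rec_denominator_nonzero[OF "4.prems"])
  ultimately have "g (Suc (Suc (Suc n)))
      = (((a + m) * (b + m) + \<i> * p * (c + 2 * m)) * g (Suc (Suc n))
          + p * (p - \<i> * (a + b + 2 * m - 1)) * g (Suc n) - p ^ 2 * g n) / ((m + 1) * (c + m))"
    by (simp add: eq_divide_eq ac_simps)
  then show ?case
    using "4.IH"[OF refl "4.prems"] unfolding useq.simps Let_def m_def[symmetric] g_def[symmetric]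
    by (simp add: add_divide_distrib diff_divide_distrib ring_distribs)
qed

lemma vseq_eq_useq_uminus: "vseq a b c p n = useq a b c (- p) n"
  by (induction a b c p n rule: vseq.induct) (simp_all add: Let_def algebra_simps)

lemma useq_sums:
  fixes a b c p z :: complex
  assumes c: "\<forall>n::nat. c \<noteq> - of_nat n" and z: "norm z < 1"
  shows "(\<lambda>n. useq a b c p n * z ^ n) sums (exp (\<i> * p * z) * hypF a b c z)"
proof -
  have F: "norm z < fps_conv_radius (hyp_fps a b c)"
    by (rule less_le_trans[OF _ fps_conv_radius_hyp_fps]) (simp add: z)
  then have "norm z < fps_conv_radius (fps_exp (\<i> * p) * hyp_fps a b c)"
    using fps_conv_radius_mult[of "fps_exp (\<i> * p)" "hyp_fps a b c"] by (auto intro: less_le_trans)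
  then have "(\<lambda>n. fps_nth (fps_exp (\<i> * p) * hyp_fps a b c) n * z ^ n)
               sums eval_fps (fps_exp (\<i> * p) * hyp_fps a b c) z"
    by (rule sums_eval_fps)
  also have "eval_fps (fps_exp (\<i> * p) * hyp_fps a b c) z = exp (\<i> * p * z) * hypF a b c z"
    using F by (simp add: eval_fps_mult eval_hyp_fps)
  finally show ?thesis
    by (simp add: useq_eq_fps_nth[OF c])
qed

theorem theorem3p5:
  fixes a b c p z :: complex
  assumes "\<forall>n::nat. c \<noteq> - of_nat n"
    and "norm z < 1"
  shows "(\<lambda>n. (useq a b c p n + vseq a b c p n) / 2 * z ^ n) sums (cos (p * z) * hypF a b c z)"
proof -
  have "(\<lambda>n. (useq a b c p n * z ^ n + useq a b c (- p) n * z ^ n) / 2)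
          sums ((exp (\<i> * p * z) * hypF a b c z + exp (\<i> * (- p) * z) * hypF a b c z) / 2)"
    by (intro sums_divide sums_add useq_sums assms)
  moreover have "cos (p * z) = (exp (\<i> * p * z) + exp (\<i> * (- p) * z)) / 2"
    by (simp add: cos_exp_eq mult.assoc)
  ultimately show ?thesis
    by (simp add: vseq_eq_useq_uminus algebra_simps add_divide_distrib)
qed

end
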